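(* Let $\theta\in(0,\pi)$ and $u\in\mathscr{C}^\infty_0(\mathbb{R}_+)$, and define $$\mathscr{K}_\theta(u)(t):=\int_0^\infty(st)^{-1/4}\mathfrak{K}_\theta(t/s)u(s)\,ds,\qquad t>0,$$ where $\mathfrak{K}_\theta(\tau):=\big(4\sin^2(\theta)+(\sqrt\tau-1/\sqrt\tau)^2\big)^{-1/4}$. Then for every $\beta\in(0,1/2)$, $$\int_0^\infty|\mathscr{K}_\theta(u)(t)|^2\,t^{2\beta}\,\frac{dt}{t}<+\infty,$$ i.e. $\mathscr{K}_\theta(u)\in\mathcal{L}^2_{-\beta}(\mathbb{R}_+)$.
   Context: $\mathscr{C}^\infty_0(\mathbb{R}_+)$: smooth functions on $[0,\infty)$ with bounded support contained in $(0,\infty)$. For $\gamma\in\mathbb{R}$, $\mathcal{L}^2_\gamma(\mathbb{R}_+)$ is the completion of $\mathscr{C}^\infty_0(\mathbb{R}_+)$ for the norm $\|u\|^2_{\mathcal{L}^2_\gamma(\mathbb{R}_+)}:=\int_0^\infty|u(r)|^2r^{-2\gamma}\,dr/r$. *)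

theory Defs
  imports "HOL-Analysis.Analysis"
begin

text \<open>Smooth functions on [0,inf) with bounded support contained in (0,inf):
  infinitely differentiable everywhere on the real line (they vanish near 0) and
  vanishing outside some compact interval [a,b] with 0 < a.\<close>
definition C0inf_Rplus :: "(real \<Rightarrow> complex) \<Rightarrow> bool" where
  "C0inf_Rplus u \<longleftrightarrow>
     (\<forall>k. \<forall>x. ((deriv ^^ k) (\<lambda>y. Re (u y))) differentiable (at x)) \<and>
     (\<forall>k. \<forall>x. ((deriv ^^ k) (\<lambda>y. Im (u y))) differentiable (at x)) \<and>
     (\<exists>a b. 0 < a \<and> a \<le> b \<and> (\<forall>x. x \<notin> {a..b} \<longrightarrow> u x = 0))"

definition frakK :: "real \<Rightarrow> real \<Rightarrow> real" where
  "frakK \<theta> \<tau> = (4 * (sin \<theta>)\<^sup>2 + (sqrt \<tau> - 1 / sqrt \<tau>)\<^sup>2) powr (-1/4)"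

definition scrK :: "real \<Rightarrow> (real \<Rightarrow> complex) \<Rightarrow> real \<Rightarrow> complex" where
  "scrK \<theta> u t = (LINT s:{0<..}|lborel. of_real ((s * t) powr (-1/4) * frakK \<theta> (t / s)) * u s)"

end

theory Submission
  imports Defs
begin

text \<open>Since \<open>4 sin\<^sup>2\<theta> + (\<surd>\<tau> - 1/\<surd>\<tau>)\<^sup>2 \<ge> sin\<^sup>2\<theta> (\<tau> + 1/\<tau>)\<close>, the kernel
  \<open>(st)^(-1/4) frakK \<theta> (t/s)\<close> is at most a multiple of \<open>t^(-1/2)\<close> and, being symmetric
  in \<open>s\<close> and \<open>t\<close>, of \<open>s^(-1/2)\<close>. As \<open>u\<close> is bounded and supported in some
  \<open>[a,b] \<subseteq> (0,\<infinity>)\<close>, \<open>scrK \<theta> u\<close> is therefore bounded near \<open>0\<close> and \<open>O(t^(-1/2))\<close> at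
  infinity. So the integrand is dominated by a multiple of \<open>t^(2\<beta>-1)\<close> on \<open>(0,1]\<close>,
  integrable as \<open>\<beta> > 0\<close>, and of \<open>t^(2\<beta>-2)\<close> on \<open>[1,\<infinity>)\<close>, integrable as \<open>\<beta> < 1/2\<close>.\<close>

lemma norm_integral_le_nn_integral_norm:
  fixes f :: "'a \<Rightarrow> 'b::{banach, second_countable_topology}"
  shows "ennreal (norm (integral\<^sup>L M f)) \<le> (\<integral>\<^sup>+ x. norm (f x) \<partial>M)"
proof (cases "integrable M f")
  case True
  then show ?thesis by (rule integral_norm_bound_ennreal)
qed (simp add: not_integrable_integral_eq)

lemma nn_integral_lt_top_if_integrable_on:
  fixes f :: "'a::euclidean_space \<Rightarrow> real"
  assumes "f integrable_on \<Omega>" "\<And>x. x \<in> \<Omega> \<Longrightarrow> 0 \<le> f x"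
  shows "(\<integral>\<^sup>+ x. ennreal (f x) * indicator \<Omega> x \<partial>lborel) < \<infinity>"
  using nn_integral_has_integral_lebesgue'[OF assms(2) integrable_integral[OF assms(1)]] by simp

lemma nn_integral_powr_unit_interval_lt_top:
  fixes C p :: real
  assumes "0 \<le> C" "-1 < p"
  shows "(\<integral>\<^sup>+ t. ennreal (C * t powr p) * indicator {0..1} t \<partial>lborel) < \<infinity>"
  using has_integral_powr_from_0[of p 1] assms
  by (intro nn_integral_lt_top_if_integrable_on integrable_on_mult_right) auto

lemma nn_integral_powr_atLeast_1_lt_top:
  fixes C p :: real
  assumes "0 \<le> C" "p < -1"
  shows "(\<integral>\<^sup>+ t. ennreal (C * t powr p) * indicator {1..} t \<partial>lborel) < \<infinity>"
  using has_integral_powr_to_inf[of p 1] assms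
  by (intro nn_integral_lt_top_if_integrable_on integrable_on_mult_right) auto

lemma nn_integral_weighted_square_lt_top:
  fixes f :: "real \<Rightarrow> real" and \<beta> \<gamma> A B :: real
  assumes "0 < \<beta>" "\<beta> < \<gamma>"
    and near_0: "\<And>t. 0 < t \<Longrightarrow> t \<le> 1 \<Longrightarrow> \<bar>f t\<bar> \<le> A"
    and near_inf: "\<And>t. 1 \<le> t \<Longrightarrow> \<bar>f t\<bar> \<le> B * t powr (-\<gamma>)"
  shows "(\<integral>\<^sup>+ t\<in>{0<..}. ennreal ((f t)\<^sup>2 * t powr (2 * \<beta>) / t) \<partial>lborel) < \<infinity>"
proof -
  define G_0 where "G_0 t = ennreal (A\<^sup>2 * t powr (2 * \<beta> - 1)) * indicator {0..1} t" for t
  define G_inf where "G_inf t = ennreal (B\<^sup>2 * t powr (2 * \<beta> - 2 * \<gamma> - 1)) * indicator {1..} t" for t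
  have "ennreal ((f t)\<^sup>2 * t powr (2 * \<beta>) / t) * indicator {0<..} t \<le> G_0 t + G_inf t" for t
  proof (cases "0 < t")
    case True
    then have weight: "t powr (2 * \<beta>) / t = t powr (2 * \<beta> - 1)"
      by (simp add: powr_diff)
    show ?thesis
    proof (cases "t \<le> 1")
      case True
      have "(f t)\<^sup>2 \<le> A\<^sup>2"
        using power_mono[OF near_0[OF \<open>0 < t\<close> True] abs_ge_zero, of 2] by simp
      then have "(f t)\<^sup>2 * t powr (2 * \<beta>) / t \<le> A\<^sup>2 * t powr (2 * \<beta> - 1)"
        by (simp add: weight mult_right_mono flip: times_divide_eq_right)
      then show ?thesis
        using True \<open>0 < t\<close> by (simp add: G_0_def ennreal_leI add_increasing2)
    next
      case False
      have "(f t)\<^sup>2 \<le> (B * t powr (-\<gamma>))\<^sup>2"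
        using power_mono[OF near_inf abs_ge_zero, of t 2] False by simp
      also have "\<dots> = B\<^sup>2 * t powr (- 2 * \<gamma>)"
        using \<open>0 < t\<close> by (simp add: power_mult_distrib powr_powr mult.commute flip: powr_realpow)
      finally have "(f t)\<^sup>2 * t powr (2 * \<beta>) / t \<le> B\<^sup>2 * t powr (- 2 * \<gamma>) * t powr (2 * \<beta> - 1)"
        by (simp add: weight mult_right_mono flip: times_divide_eq_right)
      also have "\<dots> = B\<^sup>2 * t powr (2 * \<beta> - 2 * \<gamma> - 1)"
        by (simp add: algebra_simps flip: powr_add)
      finally show ?thesis
        using False by (simp add: G_inf_def ennreal_leI add_increasing)
    qed
  qed simp
  then have "(\<integral>\<^sup>+ t\<in>{0<..}. ennreal ((f t)\<^sup>2 * t powr (2 * \<beta>) / t) \<partial>lborel)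
      \<le> (\<integral>\<^sup>+ t. G_0 t + G_inf t \<partial>lborel)"
    by (rule nn_integral_mono)
  also have "\<dots> = (\<integral>\<^sup>+ t. G_0 t \<partial>lborel) + (\<integral>\<^sup>+ t. G_inf t \<partial>lborel)"
    unfolding G_0_def G_inf_def by (rule nn_integral_add) measurable
  also have "\<dots> < \<infinity>"
    using nn_integral_powr_unit_interval_lt_top[of "A\<^sup>2" "2 * \<beta> - 1"]
      nn_integral_powr_atLeast_1_lt_top[of "B\<^sup>2" "2 * \<beta> - 2 * \<gamma> - 1"] assms(1,2)
    unfolding G_0_def G_inf_def by simp
  finally show ?thesis .
qed

lemma C0inf_Rplus_continuous:
  assumes "C0inf_Rplus u"
  shows "continuous_on UNIV u"
proof -
  have "((deriv ^^ 0) (\<lambda>y. Re (u y))) differentiable (at x)"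
    "((deriv ^^ 0) (\<lambda>y. Im (u y))) differentiable (at x)" for x
    using assms unfolding C0inf_Rplus_def by blast+
  then have "continuous (at x) (\<lambda>y. Re (u y))" "continuous (at x) (\<lambda>y. Im (u y))" for x
    by (simp_all add: differentiable_imp_continuous_within)
  then show ?thesis
    by (intro continuous_at_imp_continuous_on ballI) (simp only: continuous_complex_iff)
qed

lemma C0inf_Rplus_bounded_support:
  assumes "C0inf_Rplus u"
  obtains a b M where "0 < a" "a \<le> b" "\<And>x. x \<notin> {a..b} \<Longrightarrow> u x = 0" "\<And>x. cmod (u x) \<le> M"
proof -
  obtain a b where ab: "0 < a" "a \<le> b" and support: "\<And>x. x \<notin> {a..b} \<Longrightarrow> u x = 0"
    using assms unfolding C0inf_Rplus_def by blast
  have "bounded (u ` {a..b})"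
    using continuous_on_subset[OF C0inf_Rplus_continuous[OF assms] subset_UNIV]
    by (intro compact_imp_bounded compact_continuous_image) auto
  then obtain M where M: "M > 0" "\<forall>y\<in>u ` {a..b}. cmod y \<le> M"
    unfolding bounded_pos by blast
  have "cmod (u x) \<le> M" for x
  proof (cases "x \<in> {a..b}")
    case False
    with support M(1) show ?thesis by simp
  qed (use M(2) in blast)
  with ab support show thesis by (rule that)
qed

lemma frakK_inverse:
  fixes \<theta> \<tau> :: real
  assumes "\<tau> > 0"
  shows "frakK \<theta> (1 / \<tau>) = frakK \<theta> \<tau>"
proof -
  have "(sqrt (1 / \<tau>) - 1 / sqrt (1 / \<tau>))\<^sup>2 = (sqrt \<tau> - 1 / sqrt \<tau>)\<^sup>2"
    by (simp add: real_sqrt_divide power2_commute)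
  then show ?thesis unfolding frakK_def by simp
qed

lemma frakK_denominator_ge:
  fixes \<theta> \<tau> :: real
  assumes "\<tau> > 0"
  shows "(sin \<theta>)\<^sup>2 * (\<tau> + 1 / \<tau>) \<le> 4 * (sin \<theta>)\<^sup>2 + (sqrt \<tau> - 1 / sqrt \<tau>)\<^sup>2"
proof -
  have square: "(sqrt \<tau> - 1 / sqrt \<tau>)\<^sup>2 = \<tau> + 1 / \<tau> - 2"
    using assms by (simp add: power2_diff power_one_over)
  have "2 \<le> \<tau> + 1 / \<tau>"
    using zero_le_power2[of "sqrt \<tau> - 1 / sqrt \<tau>"] unfolding square by linarith
  moreover have "(sin \<theta>)\<^sup>2 \<le> 1"
    by (simp add: abs_square_le_1)
  ultimately have "(sin \<theta>)\<^sup>2 * (\<tau> + 1 / \<tau> - 2) \<le> \<tau> + 1 / \<tau> - 2"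
    by (simp add: mult_left_le_one_le)
  then show ?thesis
    unfolding square using zero_le_power2[of "sin \<theta>"] by argo
qed

lemma frakK_le:
  fixes \<theta> \<tau> :: real
  assumes "sin \<theta> \<noteq> 0" "\<tau> > 0"
  shows "frakK \<theta> \<tau> \<le> ((sin \<theta>)\<^sup>2) powr (-1/4) * \<tau> powr (-1/4)"
proof -
  have "(sin \<theta>)\<^sup>2 * \<tau> \<le> (sin \<theta>)\<^sup>2 * (\<tau> + 1 / \<tau>)"
    using assms(2) by (simp add: mult_left_mono)
  also have "\<dots> \<le> 4 * (sin \<theta>)\<^sup>2 + (sqrt \<tau> - 1 / sqrt \<tau>)\<^sup>2"
    using assms(2) by (rule frakK_denominator_ge)
  finally have "frakK \<theta> \<tau> \<le> ((sin \<theta>)\<^sup>2 * \<tau>) powr (-1/4)"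
    unfolding frakK_def using assms by (intro powr_mono2') auto
  then show ?thesis
    by (simp add: powr_mult)
qed

lemma scrK_kernel_le:
  fixes \<theta> s t :: real
  assumes "sin \<theta> \<noteq> 0" "s > 0" "t > 0"
  shows "(s * t) powr (-1/4) * frakK \<theta> (t / s) \<le> ((sin \<theta>)\<^sup>2) powr (-1/4) * t powr (-1/2)"
proof -
  have "(s * t) powr (-1/4) * frakK \<theta> (t / s)
      \<le> (s * t) powr (-1/4) * (((sin \<theta>)\<^sup>2) powr (-1/4) * (t / s) powr (-1/4))"
    using assms by (intro mult_left_mono frakK_le) auto
  also have "\<dots> = ((sin \<theta>)\<^sup>2) powr (-1/4) * (t powr (-1/4) * t powr (-1/4))"
    using assms by (simp add: powr_mult powr_divide)
  also have "\<dots> = ((sin \<theta>)\<^sup>2) powr (-1/4) * t powr (-1/2)"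
    by (simp flip: powr_add)
  finally show ?thesis .
qed

lemma scrK_kernel_symmetric:
  fixes \<theta> s t :: real
  assumes "s > 0" "t > 0"
  shows "(s * t) powr (-1/4) * frakK \<theta> (t / s) = (t * s) powr (-1/4) * frakK \<theta> (s / t)"
  using frakK_inverse[of "s / t" \<theta>] assms by (simp add: mult.commute)

lemma norm_scrK_le:
  fixes \<theta> t a b M E :: real and u :: "real \<Rightarrow> complex"
  assumes "0 < a" "a \<le> b" and support: "\<And>x. x \<notin> {a..b} \<Longrightarrow> u x = 0"
    and u_le: "\<And>x. cmod (u x) \<le> M"
    and kernel_bound: "\<And>s. s \<in> {a..b} \<Longrightarrow> (s * t) powr (-1/4) * frakK \<theta> (t / s) \<le> E"
  shows "cmod (scrK \<theta> u t) \<le> M * E * (b - a)"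
proof -
  define k where "k s = (s * t) powr (-1/4) * frakK \<theta> (t / s)" for s
  define f where "f s = indicator {0<..} s *\<^sub>R (of_real (k s) * u s)" for s
  have k_nonneg: "0 \<le> k s" for s
    unfolding k_def frakK_def by simp
  have "0 \<le> M"
    by (rule order_trans[OF norm_ge_zero u_le])
  have "0 \<le> E"
    using k_nonneg[of a] kernel_bound[of a] \<open>a \<le> b\<close> unfolding k_def by simp
  have f_le: "ennreal (norm (f s)) \<le> ennreal (M * E) * indicator {a..b} s" for s
  proof (cases "s \<in> {a..b}")
    case True
    then have "norm (f s) = k s * cmod (u s)"
      using \<open>0 < a\<close> k_nonneg[of s] by (simp add: f_def norm_mult)
    also have "\<dots> \<le> E * M"
      using True kernel_bound[of s] u_le[of s] k_nonneg[of s] \<open>0 \<le> E\<close>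
      unfolding k_def by (intro mult_mono) auto
    finally show ?thesis
      using True by (simp add: mult.commute ennreal_leI)
  qed (simp add: f_def support)
  have "ennreal (cmod (scrK \<theta> u t)) \<le> (\<integral>\<^sup>+ s. norm (f s) \<partial>lborel)"
    unfolding scrK_def set_lebesgue_integral_def f_def k_def
    by (rule norm_integral_le_nn_integral_norm)
  also have "\<dots> \<le> (\<integral>\<^sup>+ s. ennreal (M * E) * indicator {a..b} s \<partial>lborel)"
    by (intro nn_integral_mono f_le)
  also have "\<dots> = ennreal (M * E * (b - a))"
    using \<open>a \<le> b\<close> \<open>0 \<le> M\<close> \<open>0 \<le> E\<close> by (simp add: nn_integral_cmult_indicator ennreal_mult)
  finally show ?thesis
    using \<open>a \<le> b\<close> \<open>0 \<le> M\<close> \<open>0 \<le> E\<close> by simp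
qed

lemma norm_scrK_bounded_decaying:
  fixes \<theta> :: real and u :: "real \<Rightarrow> complex"
  assumes "sin \<theta> \<noteq> 0" "C0inf_Rplus u"
  obtains A B where "\<And>t. 0 < t \<Longrightarrow> cmod (scrK \<theta> u t) \<le> A"
    and "\<And>t. 0 < t \<Longrightarrow> cmod (scrK \<theta> u t) \<le> B * t powr (-1/2)"
proof -
  obtain a b M where ab: "0 < a" "a \<le> b" and support: "\<And>x. x \<notin> {a..b} \<Longrightarrow> u x = 0"
    and u_le: "\<And>x. cmod (u x) \<le> M"
    using C0inf_Rplus_bounded_support[OF assms(2)] by blast
  define c where "c = ((sin \<theta>)\<^sup>2) powr (-1/4)"
  have "cmod (scrK \<theta> u t) \<le> M * (c * a powr (-1/2)) * (b - a)" if "0 < t" for t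
  proof (rule norm_scrK_le[OF ab support u_le])
    fix s assume "s \<in> {a..b}"
    with ab have "0 < s" "a \<le> s" by auto
    have "(s * t) powr (-1/4) * frakK \<theta> (t / s) \<le> c * s powr (-1/2)"
      using scrK_kernel_le[OF assms(1) \<open>0 < t\<close> \<open>0 < s\<close>] scrK_kernel_symmetric[OF \<open>0 < s\<close> \<open>0 < t\<close>]
      unfolding c_def by simp
    also have "\<dots> \<le> c * a powr (-1/2)"
      using ab \<open>a \<le> s\<close> unfolding c_def by (intro mult_left_mono powr_mono2') auto
    finally show "(s * t) powr (-1/4) * frakK \<theta> (t / s) \<le> c * a powr (-1/2)" .
  qed
  moreover have "cmod (scrK \<theta> u t) \<le> M * (c * t powr (-1/2)) * (b - a)" if "0 < t" for t
    using ab \<open>0 < t\<close> unfolding c_def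
    by (intro norm_scrK_le[OF ab support u_le] scrK_kernel_le[OF assms(1)]) auto
  ultimately show thesis
    by (intro that[of "M * (c * a powr (-1/2)) * (b - a)" "M * c * (b - a)"]) (simp_all add: mult_ac)
qed

theorem lemma7:
  fixes \<theta> \<beta> :: real and u :: "real \<Rightarrow> complex"
  assumes "0 < \<theta>" "\<theta> < pi"
    and "C0inf_Rplus u"
    and "0 < \<beta>" "\<beta> < 1/2"
  shows "(\<integral>\<^sup>+ t\<in>{0<..}. ennreal ((cmod (scrK \<theta> u t))\<^sup>2 * t powr (2 * \<beta>) / t) \<partial>lborel) < \<infinity>"
proof -
  have "sin \<theta> \<noteq> 0"
    using sin_gt_zero[OF assms(1,2)] by simp
  then obtain A B where bounded: "\<And>t. 0 < t \<Longrightarrow> cmod (scrK \<theta> u t) \<le> A"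
    and decaying: "\<And>t. 0 < t \<Longrightarrow> cmod (scrK \<theta> u t) \<le> B * t powr (-1/2)"
    using norm_scrK_bounded_decaying assms(3) by blast
  show ?thesis
    by (rule nn_integral_weighted_square_lt_top[of \<beta> "1/2" "\<lambda>t. cmod (scrK \<theta> u t)" A B])
      (use assms(4,5) bounded decaying in auto)
qed

end
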